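(* Let $N'$ be a positive integer. For every row index $i$ with $2\le i\le N'$, the sum of the entries in the $i$-th row of $A_1^{-1}$ is $0$, and the sum of the entries in the $i$-th row of $A_2^{-1}$ is $0$.
   Context: $(a_{c,d})_{c,d\ge1}$ are the integers defined by: $a_{c,1}=1$ for $c\ge1$; $a_{1,d}=a_{2,d}=0$ for $d\ge2$; $a_{3,2}=-2$ and $a_{3,d}=0$ for $d\ge3$; and $a_{c+2,d+1}=a_{c+1,d+1}-a_{c,d}$ for $c\ge2$, $d\ge1$. $A_1$ and $A_2$ are the $N'\times N'$ matrices with $(i,j)$ entries $a_{2i-1,j}$ and $a_{2i,j}$ respectively; they are lower triangular with all diagonal entries nonzero, hence invertible. *)

theory Defs
  imports "Jordan_Normal_Form.Matrix"
begin

text \<open>The integers a(c,d), c,d >= 1 (values at index 0 are irrelevant and set to 0).\<close>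
fun acoef :: "nat \<Rightarrow> nat \<Rightarrow> int" where
  "acoef c d =
    (if c = 0 \<or> d = 0 then 0
     else if d = 1 then 1
     else if c \<le> 2 then 0
     else if c = 3 then (if d = 2 then -2 else 0)
     else acoef (c - 1) d - acoef (c - 2) (d - 1))"

text \<open>A_1 and A_2 as N x N rational matrices; JNF indices are 0-based,
  so entry (i,j) (0-based) corresponds to the paper's (i+1,j+1).\<close>
definition A1 :: "nat \<Rightarrow> rat mat" where
  "A1 N = mat N N (\<lambda>(i, j). of_int (acoef (2 * (i + 1) - 1) (j + 1)))"

definition A2 :: "nat \<Rightarrow> rat mat" where
  "A2 N = mat N N (\<lambda>(i, j). of_int (acoef (2 * (i + 1)) (j + 1)))"

end

theory Submission
  imports Defs "Jordan_Normal_Form.Determinant"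
begin

text \<open>Since a(c,d) = 0 whenever 2d > c + 1, both A_1 and A_2 are lower triangular; along
  the diagonal the recursion collapses to a(2k-1,k) = 2(-1)^(k+1) for k \<ge> 2 and
  a(2k,k) = (-1)^(k+1)(2k-1), so the diagonal has no zeros and the matrices are invertible.
  Their first columns consist of ones, i.e. A e = e_1 for the all-ones vector e; hence
  A^(-1) e_1 = e, and reading off column 1 of A^(-1) A = I shows that every row of A^(-1)
  other than the first sums to 0.\<close>

declare acoef.simps[simp del]

lemma acoef_rec: "c \<ge> 4 \<Longrightarrow> d \<ge> 2 \<Longrightarrow> acoef c d = acoef (c - 1) d - acoef (c - 2) (d - 1)"
  by (subst acoef.simps) simp

lemma acoef_first_column: "c \<ge> 1 \<Longrightarrow> acoef c (Suc 0) = 1"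
  by (subst acoef.simps) simp

lemma acoef_eq_0_above_diagonal: "c + 1 < 2 * d \<Longrightarrow> acoef c d = 0"
proof (induction c arbitrary: d rule: less_induct)
  case (less c)
  show ?case
  proof (cases "c \<ge> 4 \<and> d \<ge> 2")
    case True
    have "acoef (c - 1) d = 0" using less True by simp
    moreover have "acoef (c - 2) (d - 1) = 0"
      using less.IH[of "c - 2" "d - 1"] less.prems True by fastforce
    ultimately show ?thesis using acoef_rec True by simp
  next
    case False
    then show ?thesis using less.prems by (subst acoef.simps) auto
  qed
qed

lemma acoef_odd_diagonal: "k \<ge> 2 \<Longrightarrow> acoef (2 * k - 1) k = 2 * (-1) ^ (k + 1)"
proof (induction k rule: dec_induct)
  case base
  show ?case by (subst acoef.simps) (simp add: numeral_eq_Suc)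
next
  case (step k)
  have "acoef (2 * Suc k - 1) (Suc k) = acoef (2 * k) (Suc k) - acoef (2 * k - 1) k"
    using step(1) acoef_rec[of "2 * Suc k - 1" "Suc k"] by (simp add: numeral_eq_Suc)
  also have "acoef (2 * k) (Suc k) = 0" by (rule acoef_eq_0_above_diagonal) simp
  finally show ?case using step(3) by simp
qed

lemma acoef_even_diagonal: "k \<ge> 1 \<Longrightarrow> acoef (2 * k) k = (-1) ^ (k + 1) * (2 * int k - 1)"
proof (induction k rule: dec_induct)
  case base
  show ?case by (simp add: acoef_first_column)
next
  case (step k)
  have "acoef (2 * Suc k) (Suc k) = acoef (2 * Suc k - 1) (Suc k) - acoef (2 * k) k"
    using step(1) acoef_rec[of "2 * Suc k" "Suc k"] by simp
  also have "acoef (2 * Suc k - 1) (Suc k) = 2 * (-1) ^ (k + 2)"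
    using step(1) acoef_odd_diagonal[of "Suc k"] by simp
  finally show ?case using step(3) by (simp add: algebra_simps)
qed

lemma acoef_odd_diagonal_nonzero: "acoef (2 * k + 1) (k + 1) \<noteq> 0"
proof (cases "k = 0")
  case True
  then show ?thesis by (simp add: acoef_first_column)
next
  case False
  then show ?thesis using acoef_odd_diagonal[of "k + 1"] by simp
qed

lemma acoef_even_diagonal_nonzero: "acoef (2 * k + 2) (k + 1) \<noteq> 0"
proof
  assume "acoef (2 * k + 2) (k + 1) = 0"
  then have "2 * int (k + 1) - 1 = 0" using acoef_even_diagonal[of "k + 1"] by simp
  then show False by presburger
qed

lemma lower_triangular_invertible_mat:
  fixes A :: "'a :: field mat"
  assumes A: "A \<in> carrier_mat n n"
    and lower: "\<And>i j. i < j \<Longrightarrow> j < n \<Longrightarrow> A $$ (i, j) = 0"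
    and diag: "\<And>i. i < n \<Longrightarrow> A $$ (i, i) \<noteq> 0"
  shows "invertible_mat A"
proof -
  have "det A = prod_list (diag_mat A)" by (rule det_lower_triangular[OF lower A])
  also have "\<dots> \<noteq> 0" using A diag by (auto simp: diag_mat_def prod_list_zero_iff)
  finally have "det A \<noteq> 0" .
  from det_non_zero_imp_unit[OF A this, of "()"]
  obtain B where "B \<in> carrier_mat n n" "B * A = 1\<^sub>m n" "A * B = 1\<^sub>m n"
    unfolding Units_def ring_mat_def by auto
  then show ?thesis using A unfolding invertible_mat_def inverts_mat_def by auto
qed

lemma inverse_row_sum_eq_0_if_first_column_ones:
  fixes A :: "'a :: field mat"
  assumes A: "A \<in> carrier_mat n n" and B: "B \<in> carrier_mat n n" and AB: "inverts_mat A B"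
    and first_column: "\<And>i. i < n \<Longrightarrow> A $$ (i, 0) = 1"
    and i: "1 \<le> i" "i < n"
  shows "(\<Sum>j<n. B $$ (i, j)) = 0"
proof -
  have "A * B = 1\<^sub>m n" using AB A unfolding inverts_mat_def by simp
  then have "B * A = 1\<^sub>m n" by (rule mat_mult_left_right_inverse[OF A B])
  then have "(B * A) $$ (i, 0) = 0" using i by simp
  moreover have "(B * A) $$ (i, 0) = (\<Sum>j<n. B $$ (i, j))"
    using A B i first_column by (auto simp: scalar_prod_def lessThan_atLeast0 intro!: sum.cong)
  ultimately show ?thesis by simp
qed

theorem corollary3p6:
  fixes N :: nat
  assumes "N \<ge> 1"
  shows "invertible_mat (A1 N) \<and> invertible_mat (A2 N) \<and>
    (\<forall>B \<in> carrier_mat N N. inverts_mat (A1 N) B \<longrightarrow>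
       (\<forall>i. 1 \<le> i \<and> i < N \<longrightarrow> (\<Sum>j<N. B $$ (i, j)) = 0)) \<and>
    (\<forall>B \<in> carrier_mat N N. inverts_mat (A2 N) B \<longrightarrow>
       (\<forall>i. 1 \<le> i \<and> i < N \<longrightarrow> (\<Sum>j<N. B $$ (i, j)) = 0))"
proof -
  have A1: "A1 N \<in> carrier_mat N N"
    "\<And>i j. i < j \<Longrightarrow> j < N \<Longrightarrow> A1 N $$ (i, j) = 0"
    "\<And>i. i < N \<Longrightarrow> A1 N $$ (i, i) \<noteq> 0"
    "\<And>i. i < N \<Longrightarrow> A1 N $$ (i, 0) = 1"
    using acoef_odd_diagonal_nonzero
    by (simp_all add: A1_def acoef_eq_0_above_diagonal acoef_first_column)
  have A2: "A2 N \<in> carrier_mat N N"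
    "\<And>i j. i < j \<Longrightarrow> j < N \<Longrightarrow> A2 N $$ (i, j) = 0"
    "\<And>i. i < N \<Longrightarrow> A2 N $$ (i, i) \<noteq> 0"
    "\<And>i. i < N \<Longrightarrow> A2 N $$ (i, 0) = 1"
    using acoef_even_diagonal_nonzero
    by (simp_all add: A2_def acoef_eq_0_above_diagonal acoef_first_column)
  show ?thesis
    using lower_triangular_invertible_mat[OF A1(1-3)] lower_triangular_invertible_mat[OF A2(1-3)]
      inverse_row_sum_eq_0_if_first_column_ones[OF A1(1) _ _ A1(4)]
      inverse_row_sum_eq_0_if_first_column_ones[OF A2(1) _ _ A2(4)]
    by blast
qed

end
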